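(* In the setting described in the context, assume (A1), (A2) and (A3), and let $\gamma_0$ be sufficiently large. Let $\boldsymbol u_h\in W_h$ solve $A(\boldsymbol u_h,\boldsymbol v)=l(\boldsymbol v)$ for all $\boldsymbol v\in W_h$. Then $$\|\boldsymbol u-\boldsymbol u_h\|_a^2+\sum_{i=1}^2\gamma_0^{-1}\|S_i(\boldsymbol u)-S_i(\boldsymbol u_h)\|^2_{H^{-1/2}_h(\partial\Omega_{i,C})}$$ $$\lesssim\inf_{\boldsymbol v_h\in W_h}\Big((1+\gamma_0^{-1})\|\boldsymbol u-\boldsymbol v_h\|_a^2+\sum_{i=1}^2\Big(\gamma_0^{-1}\|\sigma_n(\boldsymbol u_i-\boldsymbol v_{h,i})\|^2_{H^{-1/2}_h(\partial\Omega_{i,C})}+\gamma_0\|[(\boldsymbol u-\boldsymbol v_h)_n]_i\|^2_{H^{1/2}_h(\partial\Omega_{i,C})}\Big)\Big).$$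
   Context: Let $d\in\{2,3\}$ and let $\Omega_1,\Omega_2\subset\mathbb{R}^d$ be bounded Lipschitz domains (elastic bodies). The boundary of each $\Omega_i$ is split into disjoint parts $\partial\Omega_{i,D}$ (Dirichlet, positive measure), $\partial\Omega_{i,N}$ (Neumann) and $\partial\Omega_{i,C}$ (potential contact zone); $\boldsymbol n_i$ is the exterior unit normal of $\Omega_i$. Let $\Omega_0$ be a $(d-1)$-dimensional curve/surface (the hybrid object) lying between $\Omega_1$ and $\Omega_2$, let $\boldsymbol p_0$ be the closest point map onto $\Omega_0$, let $\boldsymbol n_{i,0}(\boldsymbol z)$, $\boldsymbol z\in\partial\Omega_{i,C}$, be the unit normal of $\Omega_0$ at $\boldsymbol p_0(\boldsymbol z)$ pointing into $\Omega_i$, and let $\rho_{i,0}(\boldsymbol z)=\boldsymbol n_{i,0}(\boldsymbol z)\cdot(\boldsymbol z-\boldsymbol p_0(\boldsymbol z))$ be the gap. Stresses obey Hooke's law $\boldsymbol\sigma(\boldsymbol v)=\lambda_i\,\mathrm{tr}\,\boldsymbol\epsilon(\boldsymbol v)\boldsymbol I+2\mu_i\boldsymbol\epsilon(\boldsymbol v)$, $\boldsymbol\epsilon(\boldsymbol v)=\tfrac12(\nabla\boldsymbol v+\nabla\boldsymbol v^{T})$, with Lamé parameters $\lambda_i,\mu_i>0$ on $\Omega_i$; $\sigma_n(\boldsymbol v_i)=\boldsymbol n_i\cdot\boldsymbol\sigma(\boldsymbol v_i)\boldsymbol n_i$. For a triple $\boldsymbol v=(\boldsymbol v_0,\boldsymbol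 v_1,\boldsymbol v_2)$ of $\mathbb{R}^d$-valued fields on $\Omega_0,\Omega_1,\Omega_2$, the normal jump on $\partial\Omega_{i,C}$ is $[v_n]_i(\boldsymbol z)=\boldsymbol n_{i,0}(\boldsymbol z)\cdot\big(\boldsymbol v_i(\boldsymbol z)-\boldsymbol v_0(\boldsymbol p_0(\boldsymbol z))\big)$. Spaces: $V_i$ ($i=1,2$) is $H^1(\Omega_i)^d$ with zero trace on $\partial\Omega_{i,D}$; $V_0=H^{s_0}(\Omega_0)^d$ for some $s_0\ge0$ determined by the hybrid model; $W=V_0\oplus V_1\oplus V_2$. $V_{h,i}\subset V_i$, $i=0,1,2$, are conforming piecewise polynomial finite element spaces on quasi-uniform shape-regular meshes of $\Omega_i$ with mesh sizes $h_i$, and $W_h=V_{h,0}\oplus V_{h,1}\oplus V_{h,2}$. Fix $\gamma_0>0$. For each $i\in\{1,2\}$ a constraint type (equality or inequality) is fixed, and with the Nitsche normal stress $\Sigma_{n,i}(\boldsymbol v)=\sigma_n(\boldsymbol v_i)-\gamma_0h_i^{-1}([v_n]_i-\rho_{i,0})$ one sets $S_i(\boldsymbol v)=\Sigma_{n,i}(\boldsymbol v)$ (equality) or $S_i(\boldsymbol v)=\min(\Sigma_{n,i}(\boldsymbol v),0)$ pointwise (inequality); also $DS_i(\boldsymbol w)=\sigma_n(\boldsymbol w_i)-\gamma_0h_i^{-1}[w_n]_i$. For $s\in\mathbb{R}$, $\|v\|^2_{H^s_h(\partial\Omega_{i,C})}=h_i^{-2s}\|v\|^2_{L^2(\partial\Omega_{i,C})}$.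 Forms: $a_i(\boldsymbol v,\boldsymbol w)=(\boldsymbol\sigma(\boldsymbol v_i),\boldsymbol\epsilon(\boldsymbol w_i))_{\Omega_i}$ for $i=1,2$; $a_0$ is a given bilinear form on $V_0$ modelling the hybrid object (e.g. a plate or membrane). Two cases: Case 1 (auxiliary hybrid space): $I_a=\{1,2\}$, no $a_0$; Case 2 (physical hybrid model): $I_a=\{0,1,2\}$. Set $a(\boldsymbol v,\boldsymbol w)=\sum_{i\in I_a}a_i(\boldsymbol v_i,\boldsymbol w_i)$, $\|\boldsymbol v\|_a^2=a(\boldsymbol v,\boldsymbol v)$; $b_i(\boldsymbol v,\boldsymbol w)=\gamma_0^{-1}h_i(S_i(\boldsymbol v),DS_i(\boldsymbol w))_{L^2(\partial\Omega_{i,C})}$, $b=b_1+b_2$; $c_i(\boldsymbol v,\boldsymbol w)=\gamma_0^{-1}h_i(\sigma_n(\boldsymbol v_i),\sigma_n(\boldsymbol w_i))_{L^2(\partial\Omega_{i,C})}$, $c=c_1+c_2$, $\|\boldsymbol v\|_c^2=c(\boldsymbol v,\boldsymbol v)$; $A(\boldsymbol v,\boldsymbol w)=a(\boldsymbol v,\boldsymbol w)+b(\boldsymbol v,\boldsymbol w)-c(\boldsymbol v,\boldsymbol w)$. The load is $l(\boldsymbol v)=\sum_{i\in I_a}l_i(\boldsymbol v_i)$ with $l_i$ given bounded linear functionals on $V_i$. Assumptions: (A1) for each $i\in I_a$, $a_i$ is symmetric, coercive and continuous on $V_i$: $\|\boldsymbol v\|^2_{V_i}\lesssim a_i(\boldsymbol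 v,\boldsymbol v)$ and $a_i(\boldsymbol v,\boldsymbol w)\lesssim\|\boldsymbol v\|_{V_i}\|\boldsymbol w\|_{V_i}$. (A2) inverse bound: $\|\boldsymbol v\|_c^2\le C_1\gamma_0^{-1}\|\boldsymbol v\|_a^2$ for all $\boldsymbol v\in W_h$, with $C_1$ independent of $h_i$ and $\gamma_0$. (A3) the exact solution $\boldsymbol u=(\boldsymbol u_0,\boldsymbol u_1,\boldsymbol u_2)\in W$ is regular enough that $\sigma_n(\boldsymbol u_i)\in L^2(\partial\Omega_{i,C})$, $i=1,2$, and it satisfies the consistency relation $A(\boldsymbol u,\boldsymbol v)=l(\boldsymbol v)$ for all $\boldsymbol v\in W_h$. The notation $X\lesssim Y$ means $X\le CY$ with $C$ independent of the mesh sizes $h_i$ and of $\gamma_0$. *)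

theory Defs
  imports "HOL-Analysis.Analysis"
begin

text \<open>The global space W is an abstract real vector space of type 'w; the two
  potential contact zones are modelled by measure spaces M 1, M 2 (surface
  measure on the contact boundaries), and boundary quantities are real
  functions on the boundary points of type 'b.
  sn i v   : the normal stress sigma_n(v_i) on the i-th contact boundary,
  jmp i v  : the normal jump [v_n]_i,
  rho i    : the gap rho_{i,0}.\<close>

definition l2ip :: "'b measure \<Rightarrow> ('b \<Rightarrow> real) \<Rightarrow> ('b \<Rightarrow> real) \<Rightarrow> real" where
  "l2ip M f g = (\<integral>z. f z * g z \<partial>M)"

definition sqint :: "'b measure \<Rightarrow> ('b \<Rightarrow> real) \<Rightarrow> bool" where
  "sqint M f \<longleftrightarrow> f \<in> borel_measurable M \<and> integrable M (\<lambda>z. (f z)\<^sup>2)"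

definition Hh_norm2 :: "real \<Rightarrow> real \<Rightarrow> 'b measure \<Rightarrow> ('b \<Rightarrow> real) \<Rightarrow> real" where
  "Hh_norm2 s hi M f = hi powr (-2 * s) * l2ip M f f"

definition is_seminorm :: "('w::real_vector \<Rightarrow> real) \<Rightarrow> bool" where
  "is_seminorm N \<longleftrightarrow> (\<forall>v. 0 \<le> N v) \<and> (\<forall>v w. N (v + w) \<le> N v + N w)
      \<and> (\<forall>r v. N (r *\<^sub>R v) = \<bar>r\<bar> * N v)"

text \<open>index set I_a: Case 1 (auxiliary hybrid space) is {1,2},
  Case 2 (physical hybrid model) is {0,1,2}\<close>
definition Ia :: "bool \<Rightarrow> nat set" where
  "Ia case2 = (if case2 then {0,1,2} else {1,2})"

definition aform :: "nat set \<Rightarrow> (nat \<Rightarrow> 'w \<Rightarrow> 'w \<Rightarrow> real) \<Rightarrow> 'w \<Rightarrow> 'w \<Rightarrow> real" where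
  "aform I a v w = (\<Sum>i\<in>I. a i v w)"

definition NSig :: "(nat \<Rightarrow> 'w \<Rightarrow> 'b \<Rightarrow> real) \<Rightarrow> (nat \<Rightarrow> 'w \<Rightarrow> 'b \<Rightarrow> real)
    \<Rightarrow> (nat \<Rightarrow> 'b \<Rightarrow> real) \<Rightarrow> real \<Rightarrow> (nat \<Rightarrow> real) \<Rightarrow> nat \<Rightarrow> 'w \<Rightarrow> 'b \<Rightarrow> real" where
  "NSig sn jmp rho g0 h i v = (\<lambda>z. sn i v z - g0 / h i * (jmp i v z - rho i z))"

text \<open>S_i(v): equality constraint if ineq i is False, inequality constraint otherwise\<close>
definition Sfun :: "(nat \<Rightarrow> bool) \<Rightarrow> (nat \<Rightarrow> 'w \<Rightarrow> 'b \<Rightarrow> real) \<Rightarrow> (nat \<Rightarrow> 'w \<Rightarrow> 'b \<Rightarrow> real)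
    \<Rightarrow> (nat \<Rightarrow> 'b \<Rightarrow> real) \<Rightarrow> real \<Rightarrow> (nat \<Rightarrow> real) \<Rightarrow> nat \<Rightarrow> 'w \<Rightarrow> 'b \<Rightarrow> real" where
  "Sfun ineq sn jmp rho g0 h i v =
     (if ineq i then (\<lambda>z. min (NSig sn jmp rho g0 h i v z) 0) else NSig sn jmp rho g0 h i v)"

definition DSfun :: "(nat \<Rightarrow> 'w \<Rightarrow> 'b \<Rightarrow> real) \<Rightarrow> (nat \<Rightarrow> 'w \<Rightarrow> 'b \<Rightarrow> real)
    \<Rightarrow> real \<Rightarrow> (nat \<Rightarrow> real) \<Rightarrow> nat \<Rightarrow> 'w \<Rightarrow> 'b \<Rightarrow> real" where
  "DSfun sn jmp g0 h i w = (\<lambda>z. sn i w z - g0 / h i * jmp i w z)"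

definition bform :: "(nat \<Rightarrow> bool) \<Rightarrow> (nat \<Rightarrow> 'b measure) \<Rightarrow> (nat \<Rightarrow> 'w \<Rightarrow> 'b \<Rightarrow> real)
    \<Rightarrow> (nat \<Rightarrow> 'w \<Rightarrow> 'b \<Rightarrow> real) \<Rightarrow> (nat \<Rightarrow> 'b \<Rightarrow> real) \<Rightarrow> real \<Rightarrow> (nat \<Rightarrow> real)
    \<Rightarrow> 'w \<Rightarrow> 'w \<Rightarrow> real" where
  "bform ineq M sn jmp rho g0 h v w =
     (\<Sum>i\<in>{1,2}. h i / g0 * l2ip (M i) (Sfun ineq sn jmp rho g0 h i v) (DSfun sn jmp g0 h i w))"

definition cform :: "(nat \<Rightarrow> 'b measure) \<Rightarrow> (nat \<Rightarrow> 'w \<Rightarrow> 'b \<Rightarrow> real) \<Rightarrow> real \<Rightarrow> (nat \<Rightarrow> real)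
    \<Rightarrow> 'w \<Rightarrow> 'w \<Rightarrow> real" where
  "cform M sn g0 h v w = (\<Sum>i\<in>{1,2}. h i / g0 * l2ip (M i) (sn i v) (sn i w))"

definition Aform :: "nat set \<Rightarrow> (nat \<Rightarrow> 'w \<Rightarrow> 'w \<Rightarrow> real) \<Rightarrow> (nat \<Rightarrow> bool) \<Rightarrow> (nat \<Rightarrow> 'b measure)
    \<Rightarrow> (nat \<Rightarrow> 'w \<Rightarrow> 'b \<Rightarrow> real) \<Rightarrow> (nat \<Rightarrow> 'w \<Rightarrow> 'b \<Rightarrow> real) \<Rightarrow> (nat \<Rightarrow> 'b \<Rightarrow> real)
    \<Rightarrow> real \<Rightarrow> (nat \<Rightarrow> real) \<Rightarrow> 'w \<Rightarrow> 'w \<Rightarrow> real" where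
  "Aform I a ineq M sn jmp rho g0 h v w =
     aform I a v w + bform ineq M sn jmp rho g0 h v w - cform M sn g0 h v w"

end

theory Submission
  imports Defs
begin

(* Test the Galerkin orthogonality A(u, w) = A(uh, w) with w = vh - uh, so that the error splits as
   u - uh = (u - vh) + w.  On each contact zone the difference S_i(u) - S_i(uh) is controlled
   pointwise by the difference of the Nitsche stresses Sigma_{n,i}(u) - Sigma_{n,i}(uh), because
   min(., 0) is firmly non-expansive; since DS_i(w) is exactly that difference minus DS_i(u - vh),
   the b-form yields the H^{-1/2}_h norm of S_i(u) - S_i(uh) up to Young-type remainders in u - vh.
   The c-form leaves a term c(w, w), which the inverse bound (A2) absorbs into a(w, w) as soon as
   gamma0 >= 12 C1; collecting terms gives the estimate with constant 3 for every vh in Wh. *)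

lemma integrable_mult_sqint:
  assumes "sqint M f" "sqint M g"
  shows "integrable M (\<lambda>z. f z * g z)"
proof (rule Bochner_Integration.integrable_bound)
  show "integrable M (\<lambda>z. (f z)\<^sup>2 + (g z)\<^sup>2)" using assms unfolding sqint_def by auto
  show "(\<lambda>z. f z * g z) \<in> borel_measurable M" using assms unfolding sqint_def by auto
  have "\<bar>f z * g z\<bar> \<le> (f z)\<^sup>2 + (g z)\<^sup>2" for z
  proof -
    have "2 * (\<bar>f z\<bar> * \<bar>g z\<bar>) \<le> (f z)\<^sup>2 + (g z)\<^sup>2"
      using sum_squares_bound[of "\<bar>f z\<bar>" "\<bar>g z\<bar>"] by (simp add: power2_abs)
    moreover have "0 \<le> \<bar>f z\<bar> * \<bar>g z\<bar>" by simp
    ultimately show ?thesis unfolding abs_mult by linarith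
  qed
  then show "AE z in M. norm (f z * g z) \<le> norm ((f z)\<^sup>2 + (g z)\<^sup>2)"
    by (intro AE_I2) simp
qed

lemma sqint_add: "sqint M f \<Longrightarrow> sqint M g \<Longrightarrow> sqint M (\<lambda>z. f z + g z)"
  using integrable_mult_sqint[of M f g]
  by (auto simp: sqint_def power2_sum mult.assoc)

lemma sqint_cmult: "sqint M f \<Longrightarrow> sqint M (\<lambda>z. c * f z)"
  by (auto simp: sqint_def power_mult_distrib)

lemma sqint_diff: "sqint M f \<Longrightarrow> sqint M g \<Longrightarrow> sqint M (\<lambda>z. f z - g z)"
  using sqint_add[of M f "\<lambda>z. -1 * g z"] sqint_cmult[of M g "-1"] by simp

lemma sqint_min_zero:
  assumes "sqint M f"
  shows "sqint M (\<lambda>z. min (f z) 0)"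
proof -
  have "integrable M (\<lambda>z. (min (f z) 0)\<^sup>2)"
    by (rule Bochner_Integration.integrable_bound[where f="\<lambda>z. (f z)\<^sup>2"])
       (use assms in \<open>auto simp: sqint_def min_def abs_le_square_iff\<close>)
  then show ?thesis using assms by (auto simp: sqint_def)
qed

lemma l2ip_commute: "l2ip M f g = l2ip M g f"
  by (simp add: l2ip_def mult.commute)

lemma l2ip_nonneg: "0 \<le> l2ip M f f"
  by (simp add: l2ip_def)

lemma l2ip_cmult_left: "l2ip M (\<lambda>z. c * f z) g = c * l2ip M f g"
  by (simp add: l2ip_def mult.assoc)

lemma l2ip_cmult_right: "l2ip M f (\<lambda>z. c * g z) = c * l2ip M f g"
  by (simp add: l2ip_def mult.left_commute)

lemma l2ip_add_left:
  "sqint M f \<Longrightarrow> sqint M g \<Longrightarrow> sqint M k \<Longrightarrow>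
    l2ip M (\<lambda>z. f z + g z) k = l2ip M f k + l2ip M g k"
  using integrable_mult_sqint[of M f k] integrable_mult_sqint[of M g k]
  by (simp add: l2ip_def distrib_right)

lemma l2ip_add_right:
  "sqint M f \<Longrightarrow> sqint M g \<Longrightarrow> sqint M k \<Longrightarrow>
    l2ip M k (\<lambda>z. f z + g z) = l2ip M k f + l2ip M k g"
  using l2ip_add_left[of M f g k] by (simp add: l2ip_commute)

lemma l2ip_diff_left:
  "sqint M f \<Longrightarrow> sqint M g \<Longrightarrow> sqint M k \<Longrightarrow>
    l2ip M (\<lambda>z. f z - g z) k = l2ip M f k - l2ip M g k"
  using integrable_mult_sqint[of M f k] integrable_mult_sqint[of M g k]
  by (simp add: l2ip_def left_diff_distrib)

lemma l2ip_diff_right: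
  "sqint M f \<Longrightarrow> sqint M g \<Longrightarrow> sqint M k \<Longrightarrow>
    l2ip M k (\<lambda>z. f z - g z) = l2ip M k f - l2ip M k g"
  using l2ip_diff_left[of M f g k] by (simp add: l2ip_commute)

lemma l2ip_le_pointwise:
  assumes "sqint M f" "sqint M g" "sqint M p" "sqint M q"
    and "\<And>z. f z * g z \<le> p z * q z"
  shows "l2ip M f g \<le> l2ip M p q"
  unfolding l2ip_def
  using assms by (intro integral_mono integrable_mult_sqint) auto

lemma l2ip_diff_self:
  assumes "sqint M f" "sqint M g"
  shows "l2ip M (\<lambda>z. f z - g z) (\<lambda>z. f z - g z) = l2ip M f f - 2 * l2ip M f g + l2ip M g g"
  using assms by (simp add: l2ip_diff_left l2ip_diff_right sqint_diff l2ip_commute[of M g f])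

lemma l2ip_young:
  assumes "sqint M f" "sqint M g"
  shows "2 * l2ip M f g \<le> l2ip M f f + l2ip M g g"
  using l2ip_nonneg[of M "\<lambda>z. f z - g z"] l2ip_diff_self[OF assms] by simp

lemma l2ip_diff_self_le:
  assumes "sqint M f" "sqint M g"
  shows "l2ip M (\<lambda>z. f z - g z) (\<lambda>z. f z - g z) \<le> 2 * l2ip M f f + 2 * l2ip M g g"
proof -
  have "0 \<le> l2ip M (\<lambda>z. f z + g z) (\<lambda>z. f z + g z)" by (rule l2ip_nonneg)
  also have "\<dots> = l2ip M f f + 2 * l2ip M f g + l2ip M g g"
    using assms by (simp add: l2ip_add_left l2ip_add_right sqint_add l2ip_commute[of M g f])
  finally show ?thesis using l2ip_diff_self[OF assms] by simp
qed

lemma bilinear_sum_of_bilinear: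
  assumes "\<forall>i\<in>I. bilinear (f i)"
  shows "bilinear (\<lambda>v w. \<Sum>i\<in>I. f i v w)"
  using assms unfolding bilinear_def by (auto intro!: linear_compose_sum)

lemma bilinear_psd_cross_le:
  fixes B :: "'a::real_vector \<Rightarrow> 'a \<Rightarrow> real"
  assumes "bilinear B" "\<forall>v w. B v w = B w v" "\<forall>v. 0 \<le> B v v"
  shows "4 * B v w \<le> B v v + 4 * B w w"
proof -
  have "0 \<le> B (v - 2 *\<^sub>R w) (v - 2 *\<^sub>R w)" using assms(3) by blast
  also have "\<dots> = B v v - 4 * B v w + 4 * B w w"
    using assms(1,2) by (simp add: bilinear_lsub bilinear_rsub bilinear_lmul bilinear_rmul)
  finally show ?thesis by simp
qed

lemma bilinear_psd_diff_self_le: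
  fixes B :: "'a::real_vector \<Rightarrow> 'a \<Rightarrow> real"
  assumes "bilinear B" "\<forall>v w. B v w = B w v" "\<forall>v. 0 \<le> B v v"
  shows "B (v - w) (v - w) \<le> 2 * B v v + 2 * B w w"
proof -
  have "0 \<le> B (v + w) (v + w)" using assms(3) by blast
  also have "\<dots> = B v v + 2 * B v w + B w w"
    using assms(1,2) by (simp add: bilinear_ladd bilinear_radd)
  moreover have "B (v - w) (v - w) = B v v - 2 * B v w + B w w"
    using assms(1,2) by (simp add: bilinear_lsub bilinear_rsub)
  ultimately show ?thesis by simp
qed

lemma aform_symmetric_psd:
  assumes "\<forall>i\<in>I. bilinear (a i) \<and> (\<forall>v w. a i v w = a i w v) \<and> (\<forall>v. 0 \<le> a i v v)"
  shows "bilinear (aform I a)" "\<forall>v w. aform I a v w = aform I a w v" "\<forall>v. 0 \<le> aform I a v v"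
proof -
  have "aform I a = (\<lambda>v w. \<Sum>i\<in>I. a i v w)" by (intro ext) (simp add: aform_def)
  then show "bilinear (aform I a)" using assms by (simp add: bilinear_sum_of_bilinear)
  show "\<forall>v w. aform I a v w = aform I a w v" using assms by (simp add: aform_def)
  show "\<forall>v. 0 \<le> aform I a v v" using assms by (simp add: aform_def sum_nonneg)
qed

lemma linear_pointwise_diff:
  assumes "\<forall>z. linear (\<lambda>v. F v z)"
  shows "F (v - v') = (\<lambda>z. F v z - F v' z)"
  using linear_diff[OF assms[rule_format]] by (intro ext) auto

lemma sq_min_zero_diff_le:
  fixes a b :: real
  shows "(min a 0 - min b 0)\<^sup>2 \<le> (min a 0 - min b 0) * (a - b)"
  by (cases "a \<le> 0"; cases "b \<le> 0")
     (auto simp: power2_eq_square min_def algebra_simps mult_nonneg_nonneg mult_nonpos_nonpos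
        mult_nonpos_nonneg mult_nonneg_nonpos)

lemma Sfun_monotone:
  "(Sfun ineq sn jmp rho g0 h i v z - Sfun ineq sn jmp rho g0 h i v' z)\<^sup>2
     \<le> (Sfun ineq sn jmp rho g0 h i v z - Sfun ineq sn jmp rho g0 h i v' z)
       * (NSig sn jmp rho g0 h i v z - NSig sn jmp rho g0 h i v' z)"
  by (simp add: Sfun_def sq_min_zero_diff_le[unfolded power2_eq_square] power2_eq_square)

lemma NSig_diff:
  assumes "\<forall>z. linear (\<lambda>v. sn i v z)" "\<forall>z. linear (\<lambda>v. jmp i v z)"
  shows "(\<lambda>z. NSig sn jmp rho g0 h i v z - NSig sn jmp rho g0 h i v' z) = DSfun sn jmp g0 h i (v - v')"
  by (simp add: NSig_def DSfun_def linear_pointwise_diff[OF assms(1)]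
      linear_pointwise_diff[OF assms(2)] algebra_simps)

lemma DSfun_diff:
  assumes "\<forall>z. linear (\<lambda>v. sn i v z)" "\<forall>z. linear (\<lambda>v. jmp i v z)"
  shows "DSfun sn jmp g0 h i (v - v') = (\<lambda>z. DSfun sn jmp g0 h i v z - DSfun sn jmp g0 h i v' z)"
  by (simp add: DSfun_def linear_pointwise_diff[OF assms(1)]
      linear_pointwise_diff[OF assms(2)] algebra_simps)

lemma sqint_DSfun:
  "sqint M (sn i v) \<Longrightarrow> sqint M (jmp i v) \<Longrightarrow> sqint M (DSfun sn jmp g0 h i v)"
  unfolding DSfun_def by (intro sqint_diff sqint_cmult)

lemma sqint_Sfun:
  assumes "sqint M (sn i v)" "sqint M (jmp i v)" "sqint M (rho i)"
  shows "sqint M (Sfun ineq sn jmp rho g0 h i v)"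
proof -
  have "sqint M (NSig sn jmp rho g0 h i v)"
    unfolding NSig_def using assms by (intro sqint_diff sqint_cmult)
  then show ?thesis by (simp add: Sfun_def sqint_min_zero)
qed

lemma Hh_norm2_minus_half: "hi > 0 \<Longrightarrow> Hh_norm2 (-1/2) hi M f = hi * l2ip M f f"
  by (simp add: Hh_norm2_def)

lemma Hh_norm2_half: "hi > 0 \<Longrightarrow> Hh_norm2 (1/2) hi M f = l2ip M f f / hi"
  by (simp add: Hh_norm2_def powr_neg_one)

lemma Hh_norm2_nonneg: "0 \<le> Hh_norm2 s hi M f"
  by (simp add: Hh_norm2_def l2ip_nonneg)

(* DS_i(vh - uh) = (Sigma_{n,i}(u) - Sigma_{n,i}(uh)) - DS_i(u - vh): the first part is controlled
   by monotonicity of S_i, the second by Young's inequality. *)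
lemma Sfun_diff_estimate:
  fixes u uh vh :: "'w::real_vector" and g0 :: real and h :: "nat \<Rightarrow> real" and ineq :: "nat \<Rightarrow> bool"
  assumes lin: "\<forall>z. linear (\<lambda>v. sn i v z)" "\<forall>z. linear (\<lambda>v. jmp i v z)"
    and sq: "\<forall>v\<in>{u, uh, vh}. sqint M (sn i v) \<and> sqint M (jmp i v)" "sqint M (rho i)"
  defines "d \<equiv> \<lambda>z. Sfun ineq sn jmp rho g0 h i u z - Sfun ineq sn jmp rho g0 h i uh z"
  shows "l2ip M d d \<le> 2 * l2ip M d (DSfun sn jmp g0 h i (vh - uh))
      + 2 * l2ip M (sn i (u - vh)) (sn i (u - vh))
      + 2 * (g0 / h i)\<^sup>2 * l2ip M (jmp i (u - vh)) (jmp i (u - vh))"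
proof -
  define x where "x = u - vh"
  define p where "p = DSfun sn jmp g0 h i (u - uh)"
  define s where "s = DSfun sn jmp g0 h i x"
  have sq_diff: "sqint M (sn i (v - v'))" "sqint M (jmp i (v - v'))"
    if "v \<in> {u, uh, vh}" "v' \<in> {u, uh, vh}" for v v'
    using sq that by (auto simp: linear_pointwise_diff[OF lin(1)] linear_pointwise_diff[OF lin(2)]
        intro: sqint_diff)
  have sq_x: "sqint M (sn i x)" "sqint M (jmp i x)" unfolding x_def using sq_diff by auto
  have sq_d: "sqint M d" unfolding d_def using sq by (intro sqint_diff sqint_Sfun) auto
  have sq_p: "sqint M p" unfolding p_def using sq_diff by (intro sqint_DSfun) auto
  have sq_s: "sqint M s" unfolding s_def using sq_x by (intro sqint_DSfun)
  have "l2ip M d d \<le> l2ip M d p"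
  proof (rule l2ip_le_pointwise[OF sq_d sq_d sq_d sq_p])
    fix z
    show "d z * d z \<le> d z * p z"
      using Sfun_monotone[of ineq sn jmp rho g0 h i u z uh]
        fun_cong[OF NSig_diff[where sn=sn and jmp=jmp and rho=rho and ?g0.0=g0 and h=h and v=u
            and v'=uh, OF lin], of z]
      by (simp add: d_def p_def power2_eq_square)
  qed
  moreover have "DSfun sn jmp g0 h i (vh - uh) = (\<lambda>z. p z - s z)"
  proof -
    have "vh - uh = (u - uh) - x" by (simp add: x_def)
    then show ?thesis
      unfolding p_def s_def by (simp only: DSfun_diff[where sn=sn and jmp=jmp, OF lin])
  qed
  moreover have "2 * l2ip M d s \<le> l2ip M d d + l2ip M s s"
    using sq_d sq_s by (rule l2ip_young)
  moreover have "l2ip M s s \<le> 2 * l2ip M (sn i x) (sn i x) + 2 * (g0 / h i)\<^sup>2 * l2ip M (jmp i x) (jmp i x)"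
  proof -
    have "s = (\<lambda>z. sn i x z - g0 / h i * jmp i x z)" by (simp add: s_def DSfun_def)
    then have "l2ip M s s \<le> 2 * l2ip M (sn i x) (sn i x)
        + 2 * l2ip M (\<lambda>z. g0 / h i * jmp i x z) (\<lambda>z. g0 / h i * jmp i x z)"
      using sq_x by (simp only:) (intro l2ip_diff_self_le sqint_cmult)
    then show ?thesis
      by (simp only: l2ip_cmult_left l2ip_cmult_right) (simp add: power2_eq_square)
  qed
  ultimately show ?thesis
    using l2ip_diff_right[OF sq_p sq_s sq_d] by (simp add: x_def)
qed

lemma pointwise_linear_cross_estimate:
  assumes lin: "\<forall>z. linear (\<lambda>v. F v z)" and sq: "\<forall>v\<in>{u, uh, vh}. sqint M (F v)"
  shows "2 * (l2ip M (F u) (F (vh - uh)) - l2ip M (F uh) (F (vh - uh)))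
      \<le> l2ip M (F (u - vh)) (F (u - vh)) + 3 * l2ip M (F (vh - uh)) (F (vh - uh))"
proof -
  define x where "x = F (u - vh)"
  define w where "w = F (vh - uh)"
  have sq_x: "sqint M x" and sq_w: "sqint M w"
    using sq by (auto simp: x_def w_def linear_pointwise_diff[OF lin] intro: sqint_diff)
  have "(\<lambda>z. F u z - F uh z) = (\<lambda>z. x z + w z)"
    by (simp add: x_def w_def linear_pointwise_diff[OF lin])
  then have "l2ip M (F u) w - l2ip M (F uh) w = l2ip M x w + l2ip M w w"
    using sq sq_x sq_w l2ip_diff_left[of M "F u" "F uh" w] l2ip_add_left[of M x w w] by simp
  moreover have "2 * l2ip M x w \<le> l2ip M x x + l2ip M w w"
    using sq_x sq_w by (rule l2ip_young)
  ultimately show ?thesis by (simp add: x_def w_def)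
qed

lemma bform_diff_lower_bound:
  fixes u uh vh :: "'w::real_vector" and g0 :: real
  assumes g0: "g0 > 0"
    and zones: "\<forall>i\<in>{1,2}. h i > 0 \<and> sqint (M i) (rho i)
        \<and> (\<forall>z. linear (\<lambda>v. sn i v z)) \<and> (\<forall>z. linear (\<lambda>v. jmp i v z))"
    and sq: "\<forall>i\<in>{1,2}. \<forall>v\<in>{u, uh, vh}. sqint (M i) (sn i v) \<and> sqint (M i) (jmp i v)"
  shows "(\<Sum>i\<in>{1,2}. 1 / g0 * Hh_norm2 (-1/2) (h i) (M i)
            (\<lambda>z. Sfun ineq sn jmp rho g0 h i u z - Sfun ineq sn jmp rho g0 h i uh z))
    \<le> 2 * (bform ineq M sn jmp rho g0 h u (vh - uh) - bform ineq M sn jmp rho g0 h uh (vh - uh))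
      + 2 * (\<Sum>i\<in>{1,2}. 1 / g0 * Hh_norm2 (-1/2) (h i) (M i) (sn i (u - vh))
                        + g0 * Hh_norm2 (1/2) (h i) (M i) (jmp i (u - vh)))"
proof -
  define S where "S = Sfun ineq sn jmp rho g0 h"
  define DSw where "DSw = DSfun sn jmp g0 h"
  have termwise: "1 / g0 * Hh_norm2 (-1/2) (h i) (M i) (\<lambda>z. S i u z - S i uh z)
      \<le> 2 * (h i / g0 * l2ip (M i) (S i u) (DSw i (vh - uh))
             - h i / g0 * l2ip (M i) (S i uh) (DSw i (vh - uh)))
        + 2 * (1 / g0 * Hh_norm2 (-1/2) (h i) (M i) (sn i (u - vh))
               + g0 * Hh_norm2 (1/2) (h i) (M i) (jmp i (u - vh)))"
    if i: "i \<in> {1,2}" for i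
  proof -
    have hi: "h i > 0" and lin: "\<forall>z. linear (\<lambda>v. sn i v z)" "\<forall>z. linear (\<lambda>v. jmp i v z)"
      and sq_rho: "sqint (M i) (rho i)"
      and sq_i: "\<forall>v\<in>{u, uh, vh}. sqint (M i) (sn i v) \<and> sqint (M i) (jmp i v)"
      using zones sq i by auto
    have sq_w: "sqint (M i) (DSw i (vh - uh))"
      using sq_i
      by (auto simp: DSw_def linear_pointwise_diff[OF lin(1)] linear_pointwise_diff[OF lin(2)]
          intro!: sqint_DSfun sqint_diff)
    have split: "l2ip (M i) (\<lambda>z. S i u z - S i uh z) (DSw i (vh - uh))
        = l2ip (M i) (S i u) (DSw i (vh - uh)) - l2ip (M i) (S i uh) (DSw i (vh - uh))"
      unfolding S_def using sq_i sq_rho sq_w by (intro l2ip_diff_left sqint_Sfun) auto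
    have "1 / g0 * Hh_norm2 (-1/2) (h i) (M i) (\<lambda>z. S i u z - S i uh z)
        = h i / g0 * l2ip (M i) (\<lambda>z. S i u z - S i uh z) (\<lambda>z. S i u z - S i uh z)"
      unfolding Hh_norm2_minus_half[OF hi] by simp
    also have "\<dots> \<le> h i / g0 * (2 * l2ip (M i) (\<lambda>z. S i u z - S i uh z) (DSw i (vh - uh))
        + 2 * l2ip (M i) (sn i (u - vh)) (sn i (u - vh))
        + 2 * (g0 / h i)\<^sup>2 * l2ip (M i) (jmp i (u - vh)) (jmp i (u - vh)))"
      using hi g0 unfolding S_def DSw_def
      by (intro mult_left_mono
          Sfun_diff_estimate[where sn=sn and jmp=jmp and rho=rho and i=i, OF lin sq_i sq_rho]) auto
    also have "\<dots> = 2 * (h i / g0 * l2ip (M i) (S i u) (DSw i (vh - uh))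
             - h i / g0 * l2ip (M i) (S i uh) (DSw i (vh - uh)))
        + 2 * (1 / g0 * (h i * l2ip (M i) (sn i (u - vh)) (sn i (u - vh)))
               + g0 * (l2ip (M i) (jmp i (u - vh)) (jmp i (u - vh)) / h i))"
      unfolding split using hi g0 by (simp add: field_simps power2_eq_square)
    finally show ?thesis unfolding Hh_norm2_minus_half[OF hi] Hh_norm2_half[OF hi] .
  qed
  show ?thesis
    using termwise[of 1] termwise[of 2] by (simp add: bform_def S_def DSw_def)
qed

lemma cform_diff_upper_bound:
  fixes u uh vh :: "'w::real_vector" and g0 :: real
  assumes g0: "g0 > 0"
    and zones: "\<forall>i\<in>{1,2}. h i > 0 \<and> (\<forall>z. linear (\<lambda>v. sn i v z))"
    and sq: "\<forall>i\<in>{1,2}. \<forall>v\<in>{u, uh, vh}. sqint (M i) (sn i v)"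
  shows "2 * (cform M sn g0 h u (vh - uh) - cform M sn g0 h uh (vh - uh))
    \<le> (\<Sum>i\<in>{1,2}. 1 / g0 * Hh_norm2 (-1/2) (h i) (M i) (sn i (u - vh)))
      + 3 * cform M sn g0 h (vh - uh) (vh - uh)"
proof -
  have termwise: "2 * (h i / g0 * l2ip (M i) (sn i u) (sn i (vh - uh))
        - h i / g0 * l2ip (M i) (sn i uh) (sn i (vh - uh)))
      \<le> 1 / g0 * Hh_norm2 (-1/2) (h i) (M i) (sn i (u - vh))
        + 3 * (h i / g0 * l2ip (M i) (sn i (vh - uh)) (sn i (vh - uh)))"
    if i: "i \<in> {1,2}" for i
  proof -
    have hi: "h i > 0" and lin: "\<forall>z. linear (\<lambda>v. sn i v z)" using zones i by auto
    have "h i / g0 * (2 * (l2ip (M i) (sn i u) (sn i (vh - uh)) - l2ip (M i) (sn i uh) (sn i (vh - uh))))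
        \<le> h i / g0 * (l2ip (M i) (sn i (u - vh)) (sn i (u - vh))
            + 3 * l2ip (M i) (sn i (vh - uh)) (sn i (vh - uh)))"
      using hi g0 sq i
      by (intro mult_left_mono pointwise_linear_cross_estimate[where F="sn i", OF lin]) auto
    then show ?thesis unfolding Hh_norm2_minus_half[OF hi] by (simp add: algebra_simps)
  qed
  show ?thesis
    using termwise[of 1] termwise[of 2] by (simp add: cform_def)
qed

lemma nitsche_error_estimate:
  fixes B :: "'w::real_vector \<Rightarrow> 'w \<Rightarrow> real" and u uh vh :: 'w and g0 C1 :: real
  assumes B: "bilinear B" "\<forall>v w. B v w = B w v" "\<forall>v. 0 \<le> B v v"
    and g0: "g0 > 0" "12 * C1 \<le> g0"
    and zones: "\<forall>i\<in>{1,2}. h i > 0 \<and> sqint (M i) (rho i)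
        \<and> (\<forall>z. linear (\<lambda>v. sn i v z)) \<and> (\<forall>z. linear (\<lambda>v. jmp i v z))"
    and sq: "\<forall>i\<in>{1,2}. \<forall>v\<in>{u, uh, vh}. sqint (M i) (sn i v) \<and> sqint (M i) (jmp i v)"
    and inverse: "cform M sn g0 h (vh - uh) (vh - uh) \<le> C1 / g0 * B (vh - uh) (vh - uh)"
    and galerkin: "B u (vh - uh) + bform ineq M sn jmp rho g0 h u (vh - uh) - cform M sn g0 h u (vh - uh)
      = B uh (vh - uh) + bform ineq M sn jmp rho g0 h uh (vh - uh) - cform M sn g0 h uh (vh - uh)"
  shows "B (u - uh) (u - uh)
      + (\<Sum>i\<in>{1,2}. 1 / g0 * Hh_norm2 (-1/2) (h i) (M i)
          (\<lambda>z. Sfun ineq sn jmp rho g0 h i u z - Sfun ineq sn jmp rho g0 h i uh z))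
    \<le> 3 * ((1 + 1 / g0) * B (u - vh) (u - vh)
      + (\<Sum>i\<in>{1,2}. 1 / g0 * Hh_norm2 (-1/2) (h i) (M i) (sn i (u - vh))
                    + g0 * Hh_norm2 (1/2) (h i) (M i) (jmp i (u - vh))))"
proof -
  define e where "e = u - uh"
  define x where "x = u - vh"
  define w where "w = vh - uh"
  define T where "T = (\<Sum>i\<in>{1,2}. 1 / g0 * Hh_norm2 (-1/2) (h i) (M i)
      (\<lambda>z. Sfun ineq sn jmp rho g0 h i u z - Sfun ineq sn jmp rho g0 h i uh z))"
  define P where "P = (\<Sum>i\<in>{1,2}. 1 / g0 * Hh_norm2 (-1/2) (h i) (M i) (sn i x))"
  define R where "R = (\<Sum>i\<in>{1,2}. 1 / g0 * Hh_norm2 (-1/2) (h i) (M i) (sn i x)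
      + g0 * Hh_norm2 (1/2) (h i) (M i) (jmp i x))"
  define bd where "bd = bform ineq M sn jmp rho g0 h u w - bform ineq M sn jmp rho g0 h uh w"
  define cd where "cd = cform M sn g0 h u w - cform M sn g0 h uh w"
  have "B e e - B e x + bd - cd = 0"
  proof -
    have "w = e - x" by (simp add: e_def x_def w_def)
    then have "B e e - B e x = B u w - B uh w"
      using B(1) by (simp add: e_def bilinear_lsub bilinear_rsub)
    then show ?thesis using galerkin by (simp add: bd_def cd_def w_def)
  qed
  moreover have "T \<le> 2 * bd + 2 * R"
    unfolding T_def bd_def R_def x_def w_def
    by (rule bform_diff_lower_bound) (use g0 zones sq in auto)
  moreover have "2 * cd \<le> P + 3 * cform M sn g0 h w w"
    unfolding cd_def P_def x_def w_def
    by (rule cform_diff_upper_bound) (use g0 zones sq in auto)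
  moreover have "P \<le> R"
    unfolding P_def R_def using g0 by (intro sum_mono) (simp add: Hh_norm2_nonneg)
  moreover have "4 * B e x \<le> B e e + 4 * B x x" by (rule bilinear_psd_cross_le[OF B])
  moreover have "12 * cform M sn g0 h w w \<le> B w w"
  proof -
    have "12 * (C1 / g0) * B w w \<le> 1 * B w w"
      using g0 B(3) by (intro mult_right_mono) (auto simp: field_simps)
    then show ?thesis using inverse by (simp add: w_def)
  qed
  moreover have "B w w \<le> 2 * B e e + 2 * B x x"
    using bilinear_psd_diff_self_le[OF B, of e x] by (simp add: e_def x_def w_def)
  moreover have "0 \<le> B x x" "0 \<le> B x x / g0" using B(3) g0 by simp_all
  ultimately have "B e e + T \<le> 3 * (B x x + B x x / g0 + R)" by argo
  then show ?thesis by (simp add: e_def x_def T_def R_def algebra_simps)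
qed

lemma nitsche_quasi_optimality:
  fixes B :: "'w::real_vector \<Rightarrow> 'w \<Rightarrow> real" and Wh :: "'w set" and g0 C1 :: real
  assumes B: "bilinear B" "\<forall>v w. B v w = B w v" "\<forall>v. 0 \<le> B v v"
    and g0: "g0 > 0" "12 * C1 \<le> g0"
    and zones: "\<forall>i\<in>{1,2}. h i > 0 \<and> sqint (M i) (rho i)
        \<and> (\<forall>z. linear (\<lambda>v. sn i v z)) \<and> (\<forall>z. linear (\<lambda>v. jmp i v z))"
    and Wh: "subspace Wh" "uh \<in> Wh"
    and sq_Wh: "\<forall>v\<in>Wh. \<forall>i\<in>{1,2}. sqint (M i) (sn i v) \<and> sqint (M i) (jmp i v)"
    and sq_u: "\<forall>i\<in>{1,2}. sqint (M i) (sn i u) \<and> sqint (M i) (jmp i u)"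
    and inverse: "\<forall>v\<in>Wh. cform M sn g0 h v v \<le> C1 / g0 * B v v"
    and galerkin: "\<forall>v\<in>Wh. B u v + bform ineq M sn jmp rho g0 h u v - cform M sn g0 h u v
      = B uh v + bform ineq M sn jmp rho g0 h uh v - cform M sn g0 h uh v"
  shows "B (u - uh) (u - uh)
      + (\<Sum>i\<in>{1,2}. 1 / g0 * Hh_norm2 (-1/2) (h i) (M i)
          (\<lambda>z. Sfun ineq sn jmp rho g0 h i u z - Sfun ineq sn jmp rho g0 h i uh z))
    \<le> 3 * (INF vh\<in>Wh. (1 + 1 / g0) * B (u - vh) (u - vh)
      + (\<Sum>i\<in>{1,2}. 1 / g0 * Hh_norm2 (-1/2) (h i) (M i) (sn i (u - vh))
                    + g0 * Hh_norm2 (1/2) (h i) (M i) (jmp i (u - vh))))"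
proof -
  define F where "F vh = (1 + 1 / g0) * B (u - vh) (u - vh)
      + (\<Sum>i\<in>{1,2}. 1 / g0 * Hh_norm2 (-1/2) (h i) (M i) (sn i (u - vh))
                    + g0 * Hh_norm2 (1/2) (h i) (M i) (jmp i (u - vh)))" for vh
  define L where "L = B (u - uh) (u - uh)
      + (\<Sum>i\<in>{1,2}. 1 / g0 * Hh_norm2 (-1/2) (h i) (M i)
          (\<lambda>z. Sfun ineq sn jmp rho g0 h i u z - Sfun ineq sn jmp rho g0 h i uh z))"
  have "L \<le> 3 * F vh" if "vh \<in> Wh" for vh
    unfolding L_def F_def
  proof (rule nitsche_error_estimate[OF B g0 zones])
    have "vh - uh \<in> Wh" using Wh that by (simp add: subspace_diff)
    then show "cform M sn g0 h (vh - uh) (vh - uh) \<le> C1 / g0 * B (vh - uh) (vh - uh)"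
      and "B u (vh - uh) + bform ineq M sn jmp rho g0 h u (vh - uh) - cform M sn g0 h u (vh - uh)
        = B uh (vh - uh) + bform ineq M sn jmp rho g0 h uh (vh - uh) - cform M sn g0 h uh (vh - uh)"
      using inverse galerkin by blast+
    show "\<forall>i\<in>{1,2}. \<forall>v\<in>{u, uh, vh}. sqint (M i) (sn i v) \<and> sqint (M i) (jmp i v)"
      using sq_Wh sq_u Wh(2) that by auto
  qed
  then have "L / 3 \<le> (INF vh\<in>Wh. F vh)"
    using Wh(2) by (intro cINF_greatest) (auto simp: mult.commute)
  then show ?thesis unfolding L_def F_def by simp
qed

theorem mainTheorem5:
  fixes a :: "nat \<Rightarrow> 'w::real_vector \<Rightarrow> 'w \<Rightarrow> real"
    and N :: "nat \<Rightarrow> 'w \<Rightarrow> real"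
    and M :: "nat \<Rightarrow> 'b measure"
    and sn jmp :: "nat \<Rightarrow> 'w \<Rightarrow> 'b \<Rightarrow> real"
    and rho :: "nat \<Rightarrow> 'b \<Rightarrow> real"
    and l :: "'w \<Rightarrow> real"
    and u :: 'w
    and C1 :: real
    and case2 :: bool
    and ineq :: "nat \<Rightarrow> bool"
  assumes A1: "\<forall>i\<in>Ia case2.
        (\<forall>v. linear (a i v)) \<and> (\<forall>w. linear (\<lambda>v. a i v w)) \<and> (\<forall>v w. a i v w = a i w v)
      \<and> is_seminorm (N i)
      \<and> (\<exists>c>0. \<forall>v. c * (N i v)\<^sup>2 \<le> a i v v)
      \<and> (\<exists>C. \<forall>v w. \<bar>a i v w\<bar> \<le> C * N i v * N i w)"
    and load: "linear l" "\<exists>CL. \<forall>v. \<bar>l v\<bar> \<le> CL * (\<Sum>i\<in>Ia case2. N i v)"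
    and boundary: "\<forall>i\<in>{1,2}. finite_measure (M i) \<and> sqint (M i) (rho i)
        \<and> (\<forall>z. linear (\<lambda>v. sn i v z)) \<and> (\<forall>z. linear (\<lambda>v. jmp i v z))"
    and A3_reg: "\<forall>i\<in>{1,2}. sqint (M i) (sn i u) \<and> sqint (M i) (jmp i u)"
    and C1_pos: "C1 > 0"
  shows "\<exists>gstar C. C > 0 \<and>
    (\<forall>g0 h Wh uh.
       g0 > 0 \<and> g0 \<ge> gstar \<and> h 1 > 0 \<and> h 2 > 0 \<and> subspace Wh
       \<and> (\<forall>v\<in>Wh. \<forall>i\<in>{1,2}. sqint (M i) (sn i v) \<and> sqint (M i) (jmp i v))
       \<comment> \<open>(A2) inverse bound\<close>
       \<and> (\<forall>v\<in>Wh. cform M sn g0 h v v \<le> C1 / g0 * aform (Ia case2) a v v)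
       \<comment> \<open>(A3) consistency\<close>
       \<and> (\<forall>v\<in>Wh. Aform (Ia case2) a ineq M sn jmp rho g0 h u v = l v)
       \<comment> \<open>discrete solution\<close>
       \<and> uh \<in> Wh \<and> (\<forall>v\<in>Wh. Aform (Ia case2) a ineq M sn jmp rho g0 h uh v = l v)
     \<longrightarrow>
       aform (Ia case2) a (u - uh) (u - uh)
         + (\<Sum>i\<in>{1,2}. 1 / g0 * Hh_norm2 (-1/2) (h i) (M i)
              (\<lambda>z. Sfun ineq sn jmp rho g0 h i u z - Sfun ineq sn jmp rho g0 h i uh z))
       \<le> C * (INF vh\<in>Wh.
              (1 + 1 / g0) * aform (Ia case2) a (u - vh) (u - vh)
              + (\<Sum>i\<in>{1,2}. 1 / g0 * Hh_norm2 (-1/2) (h i) (M i) (sn i (u - vh))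
                             + g0 * Hh_norm2 (1/2) (h i) (M i) (jmp i (u - vh)))))"
proof -
  have coeffs: "\<forall>i\<in>Ia case2. bilinear (a i) \<and> (\<forall>v w. a i v w = a i w v) \<and> (\<forall>v. 0 \<le> a i v v)"
  proof
    fix i assume "i \<in> Ia case2"
    then obtain c where "c > 0" "\<forall>v. c * (N i v)\<^sup>2 \<le> a i v v"
      and "\<forall>v. linear (a i v)" "\<forall>w. linear (\<lambda>v. a i v w)" "\<forall>v w. a i v w = a i w v"
      using A1 by blast
    moreover have "0 \<le> a i v v" if "c > 0" "c * (N i v)\<^sup>2 \<le> a i v v" for v
      using that order_trans[OF mult_nonneg_nonneg[of c "(N i v)\<^sup>2"]] by simp
    ultimately show "bilinear (a i) \<and> (\<forall>v w. a i v w = a i w v) \<and> (\<forall>v. 0 \<le> a i v v)"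
      by (auto simp: bilinear_def)
  qed
  show ?thesis
    by (rule exI[of _ "12 * C1"], rule exI[of _ "3::real"], intro conjI allI impI, simp, elim conjE,
        rule nitsche_quasi_optimality[OF aform_symmetric_psd[OF coeffs]])
       (use boundary A3_reg in \<open>auto simp: Aform_def\<close>)
qed

end
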